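(* Let $E\subset\mathbb{Q}_p$ be a non-empty finite set and $\nu=\sum_{x\in E}\alpha_x\delta_x$ with $\alpha_x\in\mathbb{Z}\setminus\{0\}$. If $\xi\in\mathbb{Q}_p\setminus\{0\}$ satisfies $\widehat\nu(\xi)=0$, then for every $x\in E$ there exists $x'\in E$ with $x'\neq x$ and $|x-x'|_p\le p/|\xi|_p$.
   Context: $\chi(x)=e^{2\pi i\{x\}}$ with $\{x\}$ the $p$-adic fractional part of $x$; $\widehat\nu(\xi)=\sum_{x\in E}\alpha_x\overline{\chi(\xi x)}$. *)

theory Defs
  imports Complex_Main "HOL-Computational_Algebra.Primes"
begin

text \<open>We represent an element of Q_p by its
  canonical (unique) p-adic digit expansion  x = sum_{n in Z} a(n) p^n,
  with digits 0 <= a(n) < p and a(n) = 0 for all sufficiently negative n.\<close>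

definition padic :: "nat \<Rightarrow> (int \<Rightarrow> int) \<Rightarrow> bool" where
  "padic p a \<longleftrightarrow> (\<forall>n. 0 \<le> a n \<and> a n < int p) \<and> (\<exists>N. \<forall>n<N. a n = 0)"

text \<open>Truncation: the rational number sum_{n < m} a(n) p^n (x modulo p^m Z_p).\<close>
definition ptrunc :: "nat \<Rightarrow> (int \<Rightarrow> int) \<Rightarrow> int \<Rightarrow> rat" where
  "ptrunc p a m = (\<Sum>n\<in>{n. n < m \<and> a n \<noteq> 0}. of_int (a n) * of_nat p powi n)"

definition pcong :: "nat \<Rightarrow> int \<Rightarrow> rat \<Rightarrow> rat \<Rightarrow> bool" where
  "pcong p m q r \<longleftrightarrow> (\<exists>k::int. q - r = of_int k * of_nat p powi m)"

definition plim :: "nat \<Rightarrow> (int \<Rightarrow> rat) \<Rightarrow> (int \<Rightarrow> int)" where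
  "plim p s = (THE c. padic p c \<and>
      (\<forall>m. \<exists>M. \<forall>m'\<ge>M. pcong p m (ptrunc p c m) (s m')))"

definition psub :: "nat \<Rightarrow> (int \<Rightarrow> int) \<Rightarrow> (int \<Rightarrow> int) \<Rightarrow> (int \<Rightarrow> int)" where
  "psub p a b = plim p (\<lambda>m. ptrunc p a m - ptrunc p b m)"

definition pmult :: "nat \<Rightarrow> (int \<Rightarrow> int) \<Rightarrow> (int \<Rightarrow> int) \<Rightarrow> (int \<Rightarrow> int)" where
  "pmult p a b = plim p (\<lambda>m. ptrunc p a m * ptrunc p b m)"

definition pabs :: "nat \<Rightarrow> (int \<Rightarrow> int) \<Rightarrow> real" where
  "pabs p a = (if \<forall>n. a n = 0 then 0 else real p powi (- (LEAST n::int. a n \<noteq> 0)))"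

definition pfrac :: "nat \<Rightarrow> (int \<Rightarrow> int) \<Rightarrow> real" where
  "pfrac p a = real_of_rat (ptrunc p a 0)"

definition pchar :: "nat \<Rightarrow> (int \<Rightarrow> int) \<Rightarrow> complex" where
  "pchar p a = exp (2 * complex_of_real pi * \<i> * complex_of_real (pfrac p a))"

definition nu_hat :: "nat \<Rightarrow> (int \<Rightarrow> int) set \<Rightarrow> ((int \<Rightarrow> int) \<Rightarrow> int) \<Rightarrow> (int \<Rightarrow> int) \<Rightarrow> complex" where
  "nu_hat p E \<alpha> \<xi> = (\<Sum>x\<in>E. of_int (\<alpha> x) * cnj (pchar p (pmult p \<xi> x)))"

end

theory Submission
  imports Defs "HOL-Computational_Algebra.Polynomial_Factorial" "HOL-Library.Real_Mod"
begin

text \<open>Truncating \<open>\<xi>\<close> and the points of \<open>E\<close> far enough, every value \<open>\<chi>(\<xi>x)\<close> becomes a power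
  \<open>\<zeta>^k\<^sub>x\<close> of a primitive \<open>p^D\<close>-th root of unity \<open>\<zeta>\<close>, so the vanishing of the Fourier coefficient is an
  integer relation \<open>\<Sum> \<alpha>\<^sub>x \<zeta>^-k\<^sub>x = 0\<close>. The \<open>p^D\<close>-th cyclotomic polynomial \<open>1 + X^M + ... + X^((p-1)M)\<close>,
  \<open>M = p^(D-1)\<close>, is irreducible (Eisenstein at \<open>X + 1\<close>), so the coefficients of such a relation are
  \<open>M\<close>-periodic in the exponent. Hence every exponent \<open>k\<^sub>x\<close> shares its residue class modulo \<open>M\<close> with
  some \<open>k\<^sub>x\<^sub>'\<close>, \<open>x' \<noteq> x\<close>, which says \<open>\<xi>(x - x') \<in> p^-1 \<int>\<^sub>p\<close>, i.e. \<open>|x - x'|\<^sub>p \<le> p / |\<xi>|\<^sub>p\<close>.\<close>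

section \<open>Congruences of integer polynomials\<close>

definition poly_cong :: "int \<Rightarrow> int poly \<Rightarrow> int poly \<Rightarrow> bool" where
  "poly_cong p F G \<longleftrightarrow> [:p:] dvd F - G"

lemma poly_cong_iff_coeff: "poly_cong p F G \<longleftrightarrow> (\<forall>i. p dvd coeff (F - G) i)"
  unfolding poly_cong_def by (rule const_poly_dvd_iff)

lemma poly_cong_refl: "poly_cong p F F"
  by (simp add: poly_cong_def)

lemma poly_cong_sym: "poly_cong p F G \<Longrightarrow> poly_cong p G F"
  unfolding poly_cong_def by (subst minus_diff_eq[symmetric]) (simp only: dvd_minus_iff)

lemma poly_cong_trans: "poly_cong p F G \<Longrightarrow> poly_cong p G H \<Longrightarrow> poly_cong p F H"
  unfolding poly_cong_def using dvd_add[of "[:p:]" "F - G" "G - H"] by simp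

lemma poly_cong_diff:
  assumes "poly_cong p F G" "poly_cong p A B" shows "poly_cong p (F - A) (G - B)"
proof -
  have "F - A - (G - B) = (F - G) - (A - B)" by simp
  then show ?thesis using assms unfolding poly_cong_def by (metis dvd_diff)
qed

lemma poly_cong_mult:
  assumes "poly_cong p F G" "poly_cong p A B" shows "poly_cong p (F * A) (G * B)"
proof -
  have "F * A - G * B = (F - G) * A + G * (A - B)" by (simp add: algebra_simps)
  then show ?thesis using assms unfolding poly_cong_def by (metis dvd_add dvd_mult dvd_mult2)
qed

lemma poly_cong_power: "poly_cong p F G \<Longrightarrow> poly_cong p (F ^ n) (G ^ n)"
  by (induction n) (auto simp: poly_cong_refl poly_cong_mult)

lemma poly_cong_pcompose:
  assumes "poly_cong p F G" shows "poly_cong p (pcompose F R) (pcompose G R)"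
proof -
  obtain H where "F - G = [:p:] * H" using assms unfolding poly_cong_def by blast
  then have "pcompose F R - pcompose G R = [:p:] * pcompose H R"
    by (simp flip: pcompose_diff add: pcompose_smult)
  then show ?thesis unfolding poly_cong_def by (rule dvdI)
qed

lemma freshmans_dream_poly:
  assumes "prime p"
  shows "poly_cong (int p) ([:1, 1:] ^ p) (monom 1 p + 1)"
  unfolding poly_cong_iff_coeff
proof
  fix i
  have "p \<noteq> 0" using assms by auto
  have binom: "coeff ([:1, 1::int:] ^ p) i = int (p choose i)"
  proof (cases "i \<le> p")
    case False
    have "degree ([:1, 1::int:] ^ p) \<le> p" using degree_power_le[of "[:1, 1::int:]" p] by simp
    then show ?thesis using False by (simp add: coeff_eq_0 binomial_eq_0)
  qed (simp add: coeff_linear_poly_power)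
  show "int p dvd coeff ([:1, 1:] ^ p - (monom 1 p + 1)) i"
  proof (cases "i = 0 \<or> p \<le> i")
    case True
    then show ?thesis using \<open>p \<noteq> 0\<close> by (auto simp: binom coeff_monom binomial_eq_0)
  next
    case False
    then have "p dvd (p choose i)" using dvd_choose_prime assms by auto
    then show ?thesis using False by (auto simp: binom coeff_monom)
  qed
qed

lemma pcompose_power_left: "pcompose (F ^ n) R = pcompose F R ^ n"
  by (induction n) (simp_all add: pcompose_mult pcompose_1)

lemma pcompose_monom_1: "pcompose (monom 1 n) R = R ^ n"
proof -
  have "monom 1 n = (monom 1 1 :: 'a poly) ^ n" by (simp add: monom_power)
  moreover have "pcompose (monom 1 1) R = R" by (simp add: monom_Suc pcompose_pCons monom_0)
  ultimately show ?thesis by (simp add: pcompose_power_left)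
qed

lemma freshmans_dream_poly_power:
  assumes "prime p"
  shows "poly_cong (int p) ([:1, 1:] ^ (p ^ k)) (monom 1 (p ^ k) + 1)"
proof (induction k)
  case 0
  have "[:1, 1::int:] = monom 1 1 + 1" by (simp add: monom_Suc monom_0 one_pCons)
  then show ?case by (simp add: poly_cong_refl)
next
  case (Suc k)
  have "poly_cong (int p) ([:1, 1:] ^ (p ^ Suc k)) ((monom 1 (p ^ k) + 1) ^ p)"
    using poly_cong_power[OF Suc, of p] by (simp add: power_mult[symmetric] mult.commute)
  also have "(monom 1 (p ^ k) + 1) ^ p = pcompose ([:1, 1::int:] ^ p) (monom 1 (p ^ k))"
    by (simp add: pcompose_power_left pcompose_pCons one_pCons add.commute)
  finally have "poly_cong (int p) ([:1, 1:] ^ (p ^ Suc k)) (pcompose (monom 1 p + 1) (monom 1 (p ^ k)))"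
    using poly_cong_trans poly_cong_pcompose[OF freshmans_dream_poly[OF assms]] by blast
  also have "pcompose (monom 1 p + 1) (monom 1 (p ^ k)) = monom (1::int) (p ^ Suc k) + 1"
    by (simp add: pcompose_add pcompose_1 pcompose_monom_1 monom_power mult.commute)
  finally show ?case .
qed

lemma eisenstein_criterion:
  fixes F G H :: "int poly" and p :: int
  assumes "prime p" and F: "F = G * H" and monic: "lead_coeff F = 1"
    and dvd_low: "\<forall>i<degree F. p dvd coeff F i" and "\<not> p\<^sup>2 dvd coeff F 0"
  shows "degree G = 0 \<or> degree H = 0"
proof (rule ccontr)
  assume nonconst: "\<not> (degree G = 0 \<or> degree H = 0)"
  have units: "lead_coeff G * lead_coeff H = 1" using F monic by (simp add: lead_coeff_mult)
  have "\<not> p dvd 1" using \<open>prime p\<close> not_prime_unit by blast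
  then have "\<not> p dvd lead_coeff G" "\<not> p dvd lead_coeff H"
    using units dvd_mult2 dvd_mult by metis+
  then have exG: "\<exists>i. \<not> p dvd coeff G i" and exH: "\<exists>i. \<not> p dvd coeff H i" by blast+
  define i where "i = (LEAST i. \<not> p dvd coeff G i)"
  define j where "j = (LEAST j. \<not> p dvd coeff H j)"
  have i: "\<not> p dvd coeff G i" "\<And>k. k < i \<Longrightarrow> p dvd coeff G k"
    unfolding i_def using LeastI_ex[OF exG] not_less_Least by blast+
  have j: "\<not> p dvd coeff H j" "\<And>k. k < j \<Longrightarrow> p dvd coeff H k"
    unfolding j_def using LeastI_ex[OF exH] not_less_Least by blast+
  have "i \<le> degree G" "j \<le> degree H"
    using i(1) j(1) by (auto intro: le_degree)
  \<comment> \<open>modulo \<open>p\<close>, only the product of the two lowest non-vanishing coefficients survives\<close>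
  have "coeff F (i + j) = coeff G i * coeff H j + (\<Sum>k\<in>{..i+j}-{i}. coeff G k * coeff H (i + j - k))"
    unfolding F coeff_mult by (subst sum.remove[of _ i]) auto
  moreover have "p dvd (\<Sum>k\<in>{..i+j}-{i}. coeff G k * coeff H (i + j - k))"
  proof (intro dvd_sum)
    fix k assume "k \<in> {..i+j}-{i}"
    then have "k < i \<or> i + j - k < j" by auto
    then show "p dvd coeff G k * coeff H (i + j - k)" using i(2) j(2) by auto
  qed
  moreover have "\<not> p dvd coeff G i * coeff H j"
    using i(1) j(1) \<open>prime p\<close> by (simp add: prime_dvd_mult_iff)
  ultimately have "\<not> p dvd coeff F (i + j)" by (simp add: dvd_add_left_iff)
  then have "degree F \<le> i + j" using dvd_low by (meson not_le)
  moreover have "G \<noteq> 0" "H \<noteq> 0" using F monic by auto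
  then have "degree F = degree G + degree H" using F by (simp add: degree_mult_eq)
  ultimately have "i = degree G" "j = degree H" using \<open>i \<le> degree G\<close> \<open>j \<le> degree H\<close> by linarith+
  then have "p dvd coeff G 0" "p dvd coeff H 0" using nonconst i(2) j(2) by auto
  then have "p\<^sup>2 dvd coeff G 0 * coeff H 0" by (simp add: power2_eq_square mult_dvd_mono)
  then show False using F \<open>\<not> p\<^sup>2 dvd coeff F 0\<close> by (simp add: coeff_mult)
qed

section \<open>Cyclotomic polynomials of prime-power order\<close>

text \<open>For prime \<open>p\<close> and \<open>M = p^(K-1)\<close>, \<open>Phi p M\<close> is the \<open>p^K\<close>-th cyclotomic polynomial.\<close>

definition Phi :: "nat \<Rightarrow> nat \<Rightarrow> int poly" where
  "Phi p M = (\<Sum>t<p. monom 1 (t * M))"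

lemma Phi_mult_monom_minus_1: "Phi p M * (monom 1 M - 1) = monom 1 (p * M) - 1"
proof -
  have "Phi p M * (monom 1 M - 1) = (\<Sum>t<p. monom 1 (Suc t * M) - monom 1 (t * M))"
    unfolding Phi_def sum_distrib_right by (intro sum.cong) (auto simp: algebra_simps mult_monom)
  also have "\<dots> = monom 1 (p * M) - 1"
    by (subst sum_lessThan_telescope) (simp add: monom_0 one_pCons)
  finally show ?thesis .
qed

lemma coeff_Phi: "coeff (Phi p M) n = (\<Sum>t<p. if t * M = n then 1 else 0)"
  by (simp add: Phi_def coeff_sum coeff_monom)

lemma
  assumes "p \<ge> 1" "M \<ge> 1"
  shows lead_coeff_Phi: "lead_coeff (Phi p M) = 1"
    and degree_Phi: "degree (Phi p M) = (p - 1) * M"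
proof -
  have top: "coeff (Phi p M) ((p - 1) * M) = 1"
    using assms by (simp add: coeff_Phi cong: if_cong)
  have "coeff (Phi p M) n = 0" if "(p - 1) * M < n" for n
  proof -
    have "t * M < n" if "t < p" for t
      using \<open>(p - 1) * M < n\<close> mult_right_mono[of t "p - 1" M] that by linarith
    then show ?thesis unfolding coeff_Phi by (intro sum.neutral) auto
  qed
  then have "degree (Phi p M) \<le> (p - 1) * M" by (intro degree_le) auto
  moreover have "(p - 1) * M \<le> degree (Phi p M)" using top by (intro le_degree) auto
  ultimately show "degree (Phi p M) = (p - 1) * M" by simp
  with top show "lead_coeff (Phi p M) = 1" by simp
qed

lemma poly_Phi_1: "poly (Phi p M) 1 = int p"
  by (simp add: Phi_def poly_sum poly_monom)

text \<open>Modulo \<open>p\<close>, \<open>Phi(X + 1) = ((X + 1)^(pM) - 1) / ((X + 1)^M - 1)\<close> becomes \<open>X^((p-1)M)\<close>: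
  this is the Eisenstein shape.\<close>

lemma Phi_shift_cong:
  assumes "prime p" "K \<ge> 1"
  defines "M \<equiv> p ^ (K - 1)"
  shows "poly_cong (int p) (pcompose (Phi p M) [:1, 1:] * monom 1 M) (monom 1 (p * M))"
proof -
  let ?P = "pcompose (Phi p M) [:1, 1:]"
  have pM: "p * M = p ^ K" using assms(2) unfolding M_def by (simp add: power_eq_if)
  have cong_pk: "poly_cong (int p) ([:1, 1:] ^ (p ^ k) - 1) (monom 1 (p ^ k))" for k
    using poly_cong_diff[OF freshmans_dream_poly_power[OF assms(1)] poly_cong_refl[of _ 1]] by simp
  have cong_M: "poly_cong (int p) ([:1, 1:] ^ M - 1) (monom 1 M)"
    and cong_pM: "poly_cong (int p) ([:1, 1:] ^ (p * M) - 1) (monom 1 (p * M))"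
    unfolding pM unfolding M_def by (rule cong_pk)+
  have "pcompose (Phi p M * (monom 1 M - 1)) [:1, 1:] = pcompose (monom 1 (p * M) - 1) [:1, 1:]"
    by (simp add: Phi_mult_monom_minus_1)
  then have "?P * ([:1, 1:] ^ M - 1) = [:1, 1:] ^ (p * M) - 1"
    by (simp add: pcompose_mult pcompose_diff pcompose_monom_1 pcompose_1)
  moreover have "poly_cong (int p) (?P * monom 1 M) (?P * ([:1, 1:] ^ M - 1))"
    by (intro poly_cong_mult poly_cong_refl poly_cong_sym[OF cong_M])
  ultimately show ?thesis using cong_pM poly_cong_trans by metis
qed

lemma irreducible_monic_int_polyI:
  fixes F :: "int poly"
  assumes "lead_coeff F = 1" "degree F \<noteq> 0" "\<And>a b. F = a * b \<Longrightarrow> degree a = 0 \<or> degree b = 0"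
  shows "irreducible F"
proof (rule irreducibleI)
  show "F \<noteq> 0" using assms(1) by auto
  show "\<not> F dvd 1" using assms(2) by (auto simp: is_unit_poly_iff)
  fix a b assume ab: "F = a * b"
  then have "lead_coeff a * lead_coeff b = 1" using assms(1) by (metis lead_coeff_mult)
  then have units: "lead_coeff a dvd 1" "lead_coeff b dvd 1" by (metis dvdI mult.commute)+
  have "c dvd 1" if "degree c = 0" "lead_coeff c dvd 1" for c :: "int poly"
  proof -
    have "c = [:lead_coeff c:]" using degree_0_id[OF that(1)] that(1) by simp
    then show ?thesis using that(2) is_unit_const_poly_iff by metis
  qed
  then show "a dvd 1 \<or> b dvd 1" using assms(3)[OF ab] units by blast
qed

lemma irreducible_Phi:
  assumes "prime p" "K \<ge> 1"
  shows "irreducible (Phi p (p ^ (K - 1)))"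
proof -
  define M where "M = p ^ (K - 1)"
  let ?P = "pcompose (Phi p M) [:1, 1:]"
  have "p \<ge> 2" using prime_ge_2_nat[OF assms(1)] .
  then have "M \<ge> 1" unfolding M_def by simp
  have deg: "degree (Phi p M) = (p - 1) * M" and monic: "lead_coeff (Phi p M) = 1"
    using degree_Phi lead_coeff_Phi \<open>p \<ge> 2\<close> \<open>M \<ge> 1\<close> by simp_all
  have "lead_coeff ?P = 1" by (simp add: lead_coeff_comp monic)
  moreover have "degree ?P = (p - 1) * M" by (simp add: degree_pcompose deg)
  moreover have "int p dvd coeff ?P i" if "i < (p - 1) * M" for i
  proof -
    have "int p dvd coeff (?P * monom 1 M - monom 1 (p * M)) (i + M)"
      using Phi_shift_cong[OF assms] unfolding poly_cong_iff_coeff M_def by blast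
    moreover have "i + M \<noteq> p * M"
      using that \<open>p \<ge> 2\<close> by (cases p) auto
    ultimately show ?thesis by (simp add: mult.commute[of ?P] coeff_monom_mult coeff_monom)
  qed
  moreover have "\<not> (int p)\<^sup>2 dvd coeff ?P 0"
  proof
    have "coeff ?P 0 = int p" by (simp flip: poly_0_coeff_0 add: poly_pcompose poly_Phi_1)
    moreover assume "(int p)\<^sup>2 dvd coeff ?P 0"
    ultimately have "(int p)\<^sup>2 \<le> int p" using \<open>p \<ge> 2\<close> by (intro zdvd_imp_le) auto
    then show False using \<open>p \<ge> 2\<close> by (simp add: power2_eq_square)
  qed
  ultimately have "degree a = 0 \<or> degree b = 0" if "Phi p M = a * b" for a b
    using eisenstein_criterion[of "int p" ?P "pcompose a [:1, 1:]" "pcompose b [:1, 1:]"]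
      assms(1) that by (auto simp: pcompose_mult degree_pcompose)
  then show ?thesis unfolding M_def[symmetric]
    using irreducible_monic_int_polyI[OF monic] deg \<open>p \<ge> 2\<close> \<open>M \<ge> 1\<close> by simp
qed

section \<open>Vanishing sums of roots of unity of prime-power order\<close>

lemma map_poly_of_int_add:
  "map_poly (of_int :: int \<Rightarrow> 'a::comm_ring_1) (F + G) = map_poly of_int F + map_poly of_int G"
  by (rule poly_eqI) (simp add: coeff_map_poly)

lemma map_poly_of_int_mult:
  "map_poly (of_int :: int \<Rightarrow> 'a::comm_ring_1) (F * G) = map_poly of_int F * map_poly of_int G"
  by (rule poly_eqI) (simp add: coeff_map_poly coeff_mult of_int_sum)

lemma poly_map_poly_of_int_sum_monom:
  "finite A \<Longrightarrow> poly (map_poly (of_int :: int \<Rightarrow> 'a::comm_ring_1) (\<Sum>k\<in>A. monom (c k) (e k))) z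
     = (\<Sum>k\<in>A. of_int (c k) * z ^ e k)"
  by (induction A rule: finite_induct) (simp_all add: map_poly_of_int_add map_poly_monom poly_monom)

lemma degree_le_of_common_root:
  fixes z :: "'a::field_char_0"
  assumes "prime_elem F" "poly (map_poly of_int F) z = 0"
    and "G \<noteq> 0" "poly (map_poly of_int G) z = 0"
  shows "degree F \<le> degree G"
proof (rule ccontr)
  assume less: "\<not> degree F \<le> degree G"
  let ?root = "\<lambda>G. G \<noteq> 0 \<and> poly (map_poly (of_int :: int \<Rightarrow> 'a) G) z = 0"
  \<comment> \<open>pseudo-dividing \<open>F\<close> by a root polynomial \<open>G0\<close> of least degree leaves no remainder\<close>
  define n where "n = (LEAST n. \<exists>G. ?root G \<and> degree G = n)"
  have "\<exists>G. ?root G \<and> degree G = n"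
    unfolding n_def by (rule LeastI_ex) (use assms(3,4) in blast)
  then obtain G0 where G0: "?root G0" "degree G0 = n" by blast
  have minimal: "n \<le> degree H" if "?root H" for H
    unfolding n_def by (rule Least_le) (use that in blast)
  have "n \<le> degree G" using assms(3,4) by (intro minimal) simp
  obtain a Q where aQ: "a \<noteq> 0" "smult a F = G0 * Q + pseudo_mod F G0"
    using pseudo_mod(1)[of G0 F] G0(1) by blast
  have "poly (map_poly of_int (smult a F)) z = 0"
    using assms(2) by (simp add: map_poly_smult)
  then have "poly (map_poly (of_int :: int \<Rightarrow> 'a) (pseudo_mod F G0)) z = 0"
    using G0(1) by (simp add: aQ(2) map_poly_of_int_add map_poly_of_int_mult)
  then have "pseudo_mod F G0 = 0"
    using pseudo_mod(2)[of G0 F] G0 minimal by fastforce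
  then have "F dvd G0 * Q" using aQ by (metis add.right_neutral dvd_refl dvd_smult)
  then have "F dvd G0 \<or> F dvd Q" using assms(1) by (simp add: prime_elem_dvd_mult_iff)
  then show False
  proof
    assume "F dvd G0"
    then have "degree F \<le> n" using G0 dvd_imp_degree_le by blast
    then show False using less \<open>n \<le> degree G\<close> by simp
  next
    assume "F dvd Q"
    then obtain Q' where "Q = F * Q'" by (auto elim: dvdE)
    then have "smult a F = F * (G0 * Q')" using aQ \<open>pseudo_mod F G0 = 0\<close> by (simp add: mult_ac)
    then have "degree F = degree F + degree G0 + degree Q'"
      using aQ(1) G0(1) assms(1) by (metis degree_mult_eq degree_smult_eq mult_zero_left mult_zero_right
          prime_elem_def smult_eq_0_iff add.assoc)
    then obtain c where "G0 = [:c:]" "c \<noteq> 0" using G0(1) by (auto elim: degree_eq_zeroE)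
    then show False using G0(1) by (simp add: map_poly_pCons)
  qed
qed

lemma monic_prime_dvd_of_common_root:
  fixes z :: "'a::field_char_0"
  assumes "prime_elem F" "lead_coeff F = 1"
    and "poly (map_poly of_int F) z = 0" "poly (map_poly of_int P) z = 0"
  shows "F dvd P"
proof -
  obtain Q R where QR: "pseudo_divmod P F = (Q, R)" by fastforce
  have "F \<noteq> 0" using assms(2) by auto
  then have "P = F * Q + R" "R = 0 \<or> degree R < degree F"
    using pseudo_divmod[OF _ QR] assms(2) by simp_all
  moreover have "poly (map_poly (of_int :: int \<Rightarrow> 'a) R) z = 0"
    using assms(3,4) \<open>P = F * Q + R\<close> by (simp add: map_poly_of_int_add map_poly_of_int_mult)
  ultimately have "R = 0" using degree_le_of_common_root[OF assms(1,3)] by (meson not_le)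
  with \<open>P = F * Q + R\<close> show ?thesis by simp
qed

lemma coeff_Phi_mult:
  assumes "degree Q < M" "j < p * M"
  shows "coeff (Phi p M * Q) j = coeff Q (j mod M)"
proof -
  have "M > 0" using assms(1) by simp
  have shifted: "coeff (monom 1 (t * M) * Q) j = (if t = j div M then coeff Q (j mod M) else 0)" for t
  proof (cases "t * M \<le> j")
    case le: True
    then have "t \<le> j div M" using \<open>M > 0\<close> by (simp add: less_eq_div_iff_mult_less_eq)
    show ?thesis
    proof (cases "t = j div M")
      case False
      then have "t + 1 \<le> j div M" using \<open>t \<le> j div M\<close> by simp
      then have "(t + 1) * M \<le> j" using \<open>M > 0\<close> by (simp add: less_eq_div_iff_mult_less_eq)
      then have "degree Q < j - t * M" using assms(1) by simp
      then show ?thesis using le False by (simp add: coeff_monom_mult coeff_eq_0)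
    next
      case True
      have "\<not> j < j div M * M" using div_times_less_eq_dividend[of j M] by linarith
      then show ?thesis using True by (simp add: coeff_monom_mult minus_div_mult_eq_mod)
    qed
  next
    case False
    then have "t \<noteq> j div M" using div_times_less_eq_dividend[of j M] by auto
    then show ?thesis using False by (simp add: coeff_monom_mult)
  qed
  have "j div M < p" using assms(2) \<open>M > 0\<close> by (simp add: div_less_iff_less_mult)
  then show ?thesis by (simp add: Phi_def sum_distrib_right coeff_sum shifted)
qed

lemma poly_Phi_root_of_unity:
  assumes "p \<ge> 2" "K \<ge> 1"
  shows "poly (map_poly of_int (Phi p (p ^ (K - 1)))) (cis (2 * pi / real (p ^ K))) = 0"
proof -
  define M where "M = p ^ (K - 1)"
  define \<omega> where "\<omega> = cis (2 * pi / real p)"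
  have pM: "p ^ K = p * M" using assms(2) unfolding M_def by (simp add: power_eq_if)
  have "M > 0" unfolding M_def using assms(1) by simp
  then have "cis (2 * pi / real (p ^ K)) ^ (t * M) = \<omega> ^ t" for t
    unfolding \<omega>_def DeMoivre pM by (simp add: field_simps)
  then have "poly (map_poly of_int (Phi p M)) (cis (2 * pi / real (p ^ K))) = (\<Sum>t<p. \<omega> ^ t)"
    by (simp add: Phi_def poly_map_poly_of_int_sum_monom)
  moreover have "\<omega> \<noteq> 1"
  proof
    assume "\<omega> = 1"
    then obtain n :: int where n: "2 * pi / real p = of_int n * (2 * pi)"
      unfolding \<omega>_def cis_eq_1_iff by blast
    have "1 / real p = (2 * pi / real p) / (2 * pi)" by simp
    then have "1 / real p = of_int n" unfolding n by simp
    moreover have "0 < 1 / real p" "1 / real p < 1" using assms(1) by auto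
    ultimately show False by simp
  qed
  moreover have "\<omega> ^ p = 1" unfolding \<omega>_def DeMoivre using assms(1) by simp
  ultimately show ?thesis unfolding M_def using one_diff_power_eq[of \<omega> p] by simp
qed

lemma coeff_periodic_of_prime_power_root_of_unity:
  assumes "prime p" "K \<ge> 1"
    and "poly (map_poly of_int P) (cis (2 * pi / real (p ^ K))) = 0" "degree P < p ^ K"
    and "j1 < p ^ K" "j2 < p ^ K" "j1 mod p ^ (K - 1) = j2 mod p ^ (K - 1)"
  shows "coeff P j1 = coeff P j2"
proof -
  define M where "M = p ^ (K - 1)"
  have "p \<ge> 2" using prime_ge_2_nat[OF assms(1)] .
  have pM: "p ^ K = p * M" using assms(2) unfolding M_def by (simp add: power_eq_if)
  have "M \<ge> 1" unfolding M_def using \<open>p \<ge> 2\<close> by simp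
  have "Phi p M dvd P"
    using monic_prime_dvd_of_common_root[OF irreducible_imp_prime_poly[OF irreducible_Phi[OF assms(1,2)]]]
      lead_coeff_Phi \<open>M \<ge> 1\<close> \<open>p \<ge> 2\<close> poly_Phi_root_of_unity[OF \<open>p \<ge> 2\<close> assms(2)] assms(3)
    unfolding M_def by simp
  then obtain Q where P: "P = Phi p M * Q" by (elim dvdE)
  have "degree Q < M"
  proof (cases "Q = 0")
    case False
    have "lead_coeff (Phi p M) = 1" using lead_coeff_Phi \<open>M \<ge> 1\<close> \<open>p \<ge> 2\<close> by simp
    then have "Phi p M \<noteq> 0" by auto
    then have "degree P = (p - 1) * M + degree Q"
      using P False \<open>M \<ge> 1\<close> \<open>p \<ge> 2\<close> by (simp add: degree_mult_eq degree_Phi)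
    then show ?thesis using assms(4) \<open>p \<ge> 2\<close> unfolding pM by (simp add: algebra_simps)
  qed (use \<open>M \<ge> 1\<close> in simp)
  then show ?thesis
    using assms(5-7) unfolding P M_def[symmetric] pM by (simp add: coeff_Phi_mult)
qed

text \<open>If the weight at \<open>j x\<close> vanishes, some other point sits at \<open>j x\<close> to cancel \<open>\<alpha> x\<close>; otherwise
  the slot \<open>j x + M\<close> of the same residue class carries the same non-zero weight, so it is occupied.\<close>

lemma exists_other_in_residue_class:
  fixes \<alpha> :: "'a \<Rightarrow> int" and j :: "'a \<Rightarrow> nat"
  assumes "finite E" "x \<in> E" "\<forall>y\<in>E. \<alpha> y \<noteq> 0" "\<forall>y\<in>E. j y < q" "0 < M" "M < q" "M dvd q"
    and periodic: "\<And>k1 k2. k1 < q \<Longrightarrow> k2 < q \<Longrightarrow> k1 mod M = k2 mod M \<Longrightarrow>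
      (\<Sum>y\<in>E. if j y = k1 then \<alpha> y else 0) = (\<Sum>y\<in>E. if j y = k2 then \<alpha> y else 0)"
  shows "\<exists>y\<in>E. y \<noteq> x \<and> j y mod M = j x mod M"
proof (cases "(\<Sum>y\<in>E. if j y = j x then \<alpha> y else 0) = 0")
  case True
  have "(\<Sum>y\<in>E. if j y = j x then \<alpha> y else 0) = \<alpha> x + (\<Sum>y\<in>E - {x}. if j y = j x then \<alpha> y else 0)"
    using assms(1,2) by (simp add: sum.remove)
  moreover have "\<alpha> x \<noteq> 0" using assms(2,3) by blast
  ultimately have "(\<Sum>y\<in>E - {x}. if j y = j x then \<alpha> y else 0) \<noteq> 0" using True by simp
  then obtain y where "y \<in> E - {x}" "(if j y = j x then \<alpha> y else 0) \<noteq> 0"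
    by (rule sum.not_neutral_contains_not_neutral)
  then show ?thesis by (auto split: if_split_asm)
next
  case False
  define k where "k = (j x + M) mod q"
  have "j x < q" using assms(2,4) by simp
  have "k < q" unfolding k_def using assms(5,6) by simp
  have "k mod M = j x mod M" unfolding k_def by (simp add: mod_mod_cancel assms(7))
  have "k \<noteq> j x"
  proof (cases "j x + M < q")
    case True
    then show ?thesis unfolding k_def using assms(5) by simp
  next
    case False
    then have "k = j x + M - q" unfolding k_def using \<open>j x < q\<close> assms(6) by (simp add: le_mod_geq)
    then show ?thesis using assms(6) False by linarith
  qed
  have "(\<Sum>y\<in>E. if j y = k then \<alpha> y else 0) \<noteq> 0"
    using False periodic[OF \<open>k < q\<close> \<open>j x < q\<close> \<open>k mod M = j x mod M\<close>] by simp
  then obtain y where "y \<in> E" "(if j y = k then \<alpha> y else 0) \<noteq> 0"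
    by (rule sum.not_neutral_contains_not_neutral)
  then have "y \<in> E" "j y = k" by (auto split: if_split_asm)
  then show ?thesis using \<open>k \<noteq> j x\<close> \<open>k mod M = j x mod M\<close> by auto
qed

lemma cis_int_multiple_eq_power:
  assumes "q > 0"
  shows "cis (2 * pi * of_int w / real q) = cis (2 * pi / real q) ^ nat (w mod int q)"
proof -
  have "real_of_int w = real_of_int (int q * (w div int q) + w mod int q)"
    by (simp only: mult_div_mod_eq)
  also have "\<dots> = real q * of_int (w div int q) + of_int (w mod int q)"
    by (simp only: of_int_add of_int_mult of_int_of_nat_eq)
  also have "of_int (w mod int q) = real (nat (w mod int q))"
    using assms by simp
  finally have "2 * pi * of_int w / real q = 2 * pi * of_int (w div int q) + real (nat (w mod int q)) * (2 * pi / real q)"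
    using assms by (simp add: field_simps)
  then show ?thesis by (simp add: cis_mult[symmetric] DeMoivre)
qed

lemma vanishing_sum_prime_power_roots_of_unity_nat:
  fixes \<alpha> :: "'a \<Rightarrow> int" and j :: "'a \<Rightarrow> nat"
  assumes "prime p" "K \<ge> 1" "finite E" "x \<in> E" "\<forall>y\<in>E. \<alpha> y \<noteq> 0" "\<forall>y\<in>E. j y < p ^ K"
    and "(\<Sum>y\<in>E. of_int (\<alpha> y) * cis (2 * pi / real (p ^ K)) ^ j y) = 0"
  shows "\<exists>y\<in>E. y \<noteq> x \<and> j y mod p ^ (K - 1) = j x mod p ^ (K - 1)"
proof -
  define q M where "q = p ^ K" and "M = p ^ (K - 1)"
  define \<zeta> where "\<zeta> = cis (2 * pi / real q)"
  define A where "A k = (\<Sum>y\<in>E. if j y = k then \<alpha> y else 0)" for k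
  define P where "P = (\<Sum>k<q. monom (A k) k)"
  have "p \<ge> 2" using prime_ge_2_nat[OF assms(1)] .
  have q: "q = p * M" using assms(2) unfolding q_def M_def by (simp add: power_eq_if)
  have "0 < M" "M < q" using \<open>p \<ge> 2\<close> unfolding q M_def by simp_all
  have "poly (map_poly of_int P) \<zeta> = (\<Sum>k<q. of_int (A k) * \<zeta> ^ k)"
    unfolding P_def by (simp add: poly_map_poly_of_int_sum_monom)
  also have "\<dots> = (\<Sum>k<q. \<Sum>y\<in>E. if k = j y then of_int (\<alpha> y) * \<zeta> ^ k else 0)"
    unfolding A_def of_int_sum sum_distrib_right by (intro sum.cong refl) auto
  also have "\<dots> = (\<Sum>y\<in>E. of_int (\<alpha> y) * \<zeta> ^ j y)"
    using assms(6) unfolding q_def by (subst sum.swap) simp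
  finally have "poly (map_poly of_int P) \<zeta> = 0" using assms(7) unfolding q_def \<zeta>_def by simp
  moreover have "degree P < q"
    using \<open>M < q\<close> unfolding P_def by (intro degree_lessI) (auto simp: coeff_sum coeff_monom)
  moreover have "coeff P k = A k" if "k < q" for k
    unfolding P_def using that by (simp add: coeff_sum coeff_monom)
  ultimately have "A k1 = A k2" if "k1 < q" "k2 < q" "k1 mod M = k2 mod M" for k1 k2
    using coeff_periodic_of_prime_power_root_of_unity[OF assms(1,2), of P k1 k2] that
    unfolding q_def M_def \<zeta>_def by simp
  then show ?thesis
    using exists_other_in_residue_class[OF assms(3-5), of j q M] assms(6) \<open>0 < M\<close> \<open>M < q\<close> q
    unfolding A_def q_def M_def by fastforce
qed

lemma vanishing_sum_prime_power_roots_of_unity: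
  fixes \<alpha> w :: "'a \<Rightarrow> int"
  assumes "prime p" "K \<ge> 1" "finite E" "x \<in> E" "\<forall>y\<in>E. \<alpha> y \<noteq> 0"
    and "(\<Sum>y\<in>E. of_int (\<alpha> y) * cis (2 * pi * of_int (w y) / real (p ^ K))) = 0"
  shows "\<exists>y\<in>E. y \<noteq> x \<and> int (p ^ (K - 1)) dvd w x - w y"
proof -
  define q M where "q = p ^ K" and "M = p ^ (K - 1)"
  define j where "j y = nat (w y mod int q)" for y
  have "q > 0" unfolding q_def using prime_gt_0_nat[OF assms(1)] by simp
  have j: "j y < q" "int q dvd w y - int (j y)" for y
    using \<open>q > 0\<close> unfolding j_def by (simp_all add: nat_less_iff mod_eq_dvd_iff flip: mod_diff_eq)
  have "cis (2 * pi * of_int (w y) / real q) = cis (2 * pi / real q) ^ j y" for y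
    unfolding j_def by (rule cis_int_multiple_eq_power[OF \<open>q > 0\<close>])
  then have "(\<Sum>y\<in>E. of_int (\<alpha> y) * cis (2 * pi / real q) ^ j y) = 0"
    using assms(6) unfolding q_def[symmetric] by simp
  then obtain y where y: "y \<in> E" "y \<noteq> x" "j y mod M = j x mod M"
    using vanishing_sum_prime_power_roots_of_unity_nat[OF assms(1-5)] j(1) unfolding q_def M_def by blast
  have "int (j x) mod int M = int (j y) mod int M" using y(3) by (metis of_nat_mod)
  then have "int M dvd int (j x) - int (j y)" by (simp add: mod_eq_dvd_iff)
  moreover have "int M dvd int q" unfolding q_def M_def using assms(2) by (simp add: le_imp_power_dvd)
  then have "int M dvd w x - int (j x)" "int M dvd w y - int (j y)"
    by (rule dvd_trans[OF _ j(2)])+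
  ultimately have "int M dvd (w x - int (j x)) - (w y - int (j y)) + (int (j x) - int (j y))"
    by (blast intro: dvd_add dvd_diff)
  then show ?thesis using y unfolding M_def by auto
qed

section \<open>Congruences in \<open>\<int>[1/p]\<close> and truncated expansions\<close>

abbreviation "pp p \<equiv> (of_nat p :: rat)"

lemma pcong_refl: "pcong p m q q" unfolding pcong_def by (rule exI[of _ 0]) simp

lemma pcong_sym: "pcong p m q r \<Longrightarrow> pcong p m r q"
  unfolding pcong_def by (metis minus_diff_eq mult_minus_left of_int_minus)

lemma pcong_trans [trans]: "pcong p m q r \<Longrightarrow> pcong p m r s \<Longrightarrow> pcong p m q s"
  unfolding pcong_def
proof (elim exE)
  fix k l assume "q - r = of_int k * pp p powi m" "r - s = of_int l * pp p powi m"
  then have "q - s = of_int (k + l) * pp p powi m" by (simp add: algebra_simps)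
  then show "\<exists>k. q - s = of_int k * pp p powi m" by blast
qed

lemma pcong_add: "pcong p m a b \<Longrightarrow> pcong p m c d \<Longrightarrow> pcong p m (a + c) (b + d)"
  unfolding pcong_def
proof (elim exE)
  fix k l assume "a - b = of_int k * pp p powi m" "c - d = of_int l * pp p powi m"
  then have "(a + c) - (b + d) = of_int (k + l) * pp p powi m" by (simp add: algebra_simps)
  then show "\<exists>k. (a + c) - (b + d) = of_int k * pp p powi m" by blast
qed

lemma pcong_diff: "pcong p m a b \<Longrightarrow> pcong p m c d \<Longrightarrow> pcong p m (a - c) (b - d)"
  unfolding pcong_def
proof (elim exE)
  fix k l assume "a - b = of_int k * pp p powi m" "c - d = of_int l * pp p powi m"
  then have "(a - c) - (b - d) = of_int (k - l) * pp p powi m" by (simp add: algebra_simps)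
  then show "\<exists>k. (a - c) - (b - d) = of_int k * pp p powi m" by blast
qed

lemma pcong_iff_diff_zero: "pcong p m q r \<longleftrightarrow> pcong p m (q - r) 0"
  unfolding pcong_def by simp

lemma pcong_mono:
  assumes "p > 0" "m' \<le> m" "pcong p m q r" shows "pcong p m' q r"
proof -
  obtain k where k: "q - r = of_int k * pp p powi m" using assms(3) unfolding pcong_def by blast
  obtain d where d: "m = m' + int d" using assms(2) by (metis le_iff_add zle_iff_zadd)
  have "pp p powi m = pp p powi m' * pp p ^ d" using assms(1) unfolding d
    by (simp add: power_int_add power_int_of_nat)
  then have "q - r = of_int (k * int p ^ d) * pp p powi m'" using k by simp
  then show ?thesis unfolding pcong_def by blast
qed

lemma pcong_mult_zero:
  assumes "p > 0" "pcong p e1 a 0" "pcong p e2 b 0" shows "pcong p (e1 + e2) (a * b) 0"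
proof -
  obtain k l where "a = of_int k * pp p powi e1" "b = of_int l * pp p powi e2"
    using assms(2,3) unfolding pcong_def by auto
  then have "a * b - 0 = of_int (k * l) * pp p powi (e1 + e2)" using assms(1) by (simp add: power_int_add)
  then show ?thesis unfolding pcong_def by blast
qed

lemma pcong_sum_zero:
  assumes "finite A" "\<And>x. x \<in> A \<Longrightarrow> pcong p e (f x) 0" shows "pcong p e (sum f A) 0"
  using assms
proof (induction A rule: finite_induct)
  case empty then show ?case by (simp add: pcong_refl)
next
  case (insert x A) then show ?case using pcong_add[of p e "f x" 0 "sum f A" 0] by simp
qed

lemma pcong_mult:
  assumes "p > 0" "pcong p M a a'" "pcong p M b b'" "pcong p N a' 0" "pcong p N b' 0"
  shows "pcong p (M + min M N) (a * b) (a' * b')"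
proof -
  have x: "pcong p M (a - a') 0" and y: "pcong p M (b - b') 0"
    using assms(2,3) pcong_iff_diff_zero by blast+
  have "pcong p (M + min M N) ((a - a') * b') 0"
    by (rule pcong_mono[OF assms(1) _ pcong_mult_zero[OF assms(1) x assms(5)]]) simp
  moreover have "pcong p (M + min M N) (a' * (b - b')) 0"
    by (rule pcong_mono[OF assms(1) _ pcong_mult_zero[OF assms(1) assms(4) y]]) simp
  moreover have "pcong p (M + min M N) ((a - a') * (b - b')) 0"
    by (rule pcong_mono[OF assms(1) _ pcong_mult_zero[OF assms(1) x y]]) simp
  ultimately have "pcong p (M + min M N) ((a - a') * b' + a' * (b - b') + (a - a') * (b - b')) 0"
    using pcong_add[of p "M + min M N" _ 0 _ 0] by (metis add.right_neutral)
  moreover have "(a - a') * b' + a' * (b - b') + (a - a') * (b - b') = a * b - a' * b'"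
    by (simp add: algebra_simps)
  ultimately show ?thesis by (simp add: pcong_iff_diff_zero[of _ _ "a * b"])
qed

lemma pcong_of_int_mult_powi:
  assumes "p > 0" "int (p ^ n) dvd k"
  shows "pcong p (int n + L) (of_int k * pp p powi L) 0"
proof -
  obtain t where "k = int (p ^ n) * t" using assms(2) by (elim dvdE)
  then have "of_int k * pp p powi L - 0 = of_int t * pp p powi (int n + L)"
    using assms(1) by (simp add: power_int_add power_int_of_nat)
  then show ?thesis unfolding pcong_def by blast
qed

lemma pcong_monom_zero: "p > 0 \<Longrightarrow> N \<le> n \<Longrightarrow> pcong p N (of_int c * pp p powi n) 0"
  by (rule pcong_mono[of p N n]) (auto simp: pcong_def)

lemma pcong_digit_dvd:
  assumes "p > 0" "pcong p (n + 1) (of_int x * pp p powi n) 0" shows "int p dvd x"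
proof -
  obtain k where "of_int x * pp p powi n = of_int k * pp p powi (n + 1)"
    using assms(2) unfolding pcong_def by auto
  then have "of_int x * pp p powi n = (of_int (k * int p) :: rat) * pp p powi n"
    using assms(1) by (simp add: power_int_add)
  then have "(of_int x :: rat) = of_int (k * int p)" using assms(1) by simp
  then have "x = k * int p" by (simp only: of_int_eq_iff)
  then show ?thesis by simp
qed

lemma exists_least_int:
  fixes P :: "int \<Rightarrow> bool"
  assumes "P n" "\<And>n. n < N \<Longrightarrow> \<not> P n"
  shows "\<exists>n0. P n0 \<and> (\<forall>n<n0. \<not> P n)"
proof -
  have nN: "N \<le> n" using assms by force
  define k where "k = (LEAST k::nat. P (N + int k))"
  have "P (N + int (nat (n - N)))" using assms nN by simp
  then have Pk: "P (N + int k)" unfolding k_def by (rule LeastI)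
  have "\<not> P m" if "m < N + int k" for m
  proof (cases "m < N")
    case True then show ?thesis using assms by auto
  next
    case False
    then have "nat (m - N) < k" using that by auto
    then have "\<not> P (N + int (nat (m - N)))" unfolding k_def by (rule not_less_Least)
    then show ?thesis using False by simp
  qed
  then show ?thesis using Pk by blast
qed

lemma padic_bounded_below: "padic p a \<Longrightarrow> \<exists>N. \<forall>n<N. a n = 0" unfolding padic_def by blast

lemma ptrunc_cong: "(\<And>n. n < m \<Longrightarrow> a n = b n) \<Longrightarrow> ptrunc p a m = ptrunc p b m"
  unfolding ptrunc_def by (rule sum.cong) auto

lemma ptrunc_eq_0: "(\<And>n. n < m \<Longrightarrow> a n = 0) \<Longrightarrow> ptrunc p a m = 0"
  unfolding ptrunc_def by (rule sum.neutral) auto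

lemma ptrunc_eq_sum:
  assumes "\<And>n. n < N \<Longrightarrow> a n = 0"
  shows "ptrunc p a m = (\<Sum>n\<in>{N..<m}. of_int (a n) * pp p powi n)"
  unfolding ptrunc_def
proof (rule sum.mono_neutral_left)
  show "finite {N..<m}" by simp
  show "{n. n < m \<and> a n \<noteq> 0} \<subseteq> {N..<m}" using assms by (auto simp: not_less[symmetric])
  show "\<forall>i\<in>{N..<m} - {n. n < m \<and> a n \<noteq> 0}. of_int (a i) * pp p powi i = 0" by auto
qed

lemma ptrunc_add_1:
  assumes "padic p a" shows "ptrunc p a (m + 1) = ptrunc p a m + of_int (a m) * pp p powi m"
proof -
  obtain N where N: "\<forall>n<N. a n = 0" using padic_bounded_below[OF assms] by blast
  define N' where "N' = min N m"
  have N': "\<And>n. n < N' \<Longrightarrow> a n = 0" using N unfolding N'_def by auto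
  have "{N'..<m + 1} = insert m {N'..<m}" unfolding N'_def by auto
  then show ?thesis by (simp add: ptrunc_eq_sum[OF N'] add.commute)
qed

lemma pcong_ptrunc_zero:
  assumes "p > 0" "\<And>n. n < N \<Longrightarrow> a n = 0" shows "pcong p N (ptrunc p a m) 0"
proof -
  have e: "ptrunc p a m = (\<Sum>n\<in>{N..<m}. of_int (a n) * pp p powi n)" by (rule ptrunc_eq_sum[OF assms(2)])
  show ?thesis unfolding e by (rule pcong_sum_zero) (auto intro: pcong_monom_zero[OF assms(1)])
qed

lemma padic_pcong_ptrunc_zero:
  assumes "p > 0" "padic p a"
  obtains N where "\<And>m. pcong p N (ptrunc p a m) 0"
  using padic_bounded_below[OF assms(2)] pcong_ptrunc_zero[OF assms(1)] by metis

lemma pcong_ptrunc_mono: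
  assumes "p > 0" "padic p a" "m \<le> m2" shows "pcong p m (ptrunc p a m2) (ptrunc p a m)"
proof -
  obtain N where N: "\<forall>n<N. a n = 0" using padic_bounded_below[OF assms(2)] by blast
  define N' where "N' = min N m"
  have N': "\<And>n. n < N' \<Longrightarrow> a n = 0" using N unfolding N'_def by auto
  have u: "{N'..<m2} = {N'..<m} \<union> {m..<m2}" and d: "{N'..<m} \<inter> {m..<m2} = {}" using assms(3) unfolding N'_def by auto
  have "ptrunc p a m2 = (\<Sum>n\<in>{N'..<m} \<union> {m..<m2}. of_int (a n) * pp p powi n)"
    unfolding u[symmetric] by (rule ptrunc_eq_sum[OF N'])
  also have "\<dots> = ptrunc p a m + (\<Sum>n\<in>{m..<m2}. of_int (a n) * pp p powi n)"
  proof -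
    have "(\<Sum>n\<in>{N'..<m} \<union> {m..<m2}. of_int (a n) * pp p powi n) =
      (\<Sum>n\<in>{N'..<m}. of_int (a n) * pp p powi n) + (\<Sum>n\<in>{m..<m2}. of_int (a n) * pp p powi n)"
      by (rule sum.union_disjoint) (simp_all only: finite_atLeastLessThan_int d)
    also have "(\<Sum>n\<in>{N'..<m}. of_int (a n) * pp p powi n) = ptrunc p a m"
      by (rule ptrunc_eq_sum[where p=p and m=m, OF N', symmetric])
    finally show ?thesis .
  qed
  finally have "ptrunc p a m2 - ptrunc p a m = (\<Sum>n\<in>{m..<m2}. of_int (a n) * pp p powi n)"
    by simp
  moreover have "pcong p m (\<Sum>n\<in>{m..<m2}. of_int (a n) * pp p powi n) 0"
    by (rule pcong_sum_zero) (auto intro: pcong_monom_zero[OF assms(1)])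
  ultimately show ?thesis by (subst pcong_iff_diff_zero) simp
qed

lemma padic_digit_eq:
  assumes "p > 0" "padic p c" "padic p c'" "\<forall>k<n. c k = c' k"
    and "pcong p (n + 1) (ptrunc p c (n + 1)) (ptrunc p c' (n + 1))"
  shows "c n = c' n"
proof (rule ccontr)
  assume "c n \<noteq> c' n"
  have "ptrunc p c n = ptrunc p c' n" by (rule ptrunc_cong) (use assms(4) in auto)
  then have "pcong p (n + 1) (of_int (c n - c' n) * pp p powi n) 0"
    using assms(5) ptrunc_add_1[OF assms(2), of n] ptrunc_add_1[OF assms(3), of n]
    by (subst (asm) pcong_iff_diff_zero) (simp add: algebra_simps)
  then have "int p dvd c n - c' n" by (rule pcong_digit_dvd[OF assms(1)])
  then have "\<bar>int p\<bar> \<le> \<bar>c n - c' n\<bar>" using \<open>c n \<noteq> c' n\<close> by (intro dvd_imp_le_int) simp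
  moreover have "0 \<le> c n" "c n < int p" "0 \<le> c' n" "c' n < int p"
    using assms(2,3) unfolding padic_def by auto
  ultimately show False by linarith
qed

lemma padic_eq_below:
  assumes "p > 0" "padic p c" "padic p c'" "pcong p L (ptrunc p c L) (ptrunc p c' L)"
  shows "\<forall>n<L. c n = c' n"
proof (rule ccontr)
  assume "\<not> (\<forall>n<L. c n = c' n)"
  then obtain n1 where n1: "n1 < L" "c n1 \<noteq> c' n1" by auto
  obtain N where "\<forall>n<N. c n = 0" using padic_bounded_below[OF assms(2)] by blast
  moreover obtain N' where "\<forall>n<N'. c' n = 0" using padic_bounded_below[OF assms(3)] by blast
  ultimately obtain n where n: "c n \<noteq> c' n" "\<forall>k<n. c k = c' k"
    using exists_least_int[of "\<lambda>n. c n \<noteq> c' n" n1 "min N N'"] n1 by force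
  then have "n + 1 \<le> L" using n1 by force
  then have "pcong p (n + 1) (ptrunc p c L) (ptrunc p c (n + 1))"
    and "pcong p (n + 1) (ptrunc p c' L) (ptrunc p c' (n + 1))"
    and "pcong p (n + 1) (ptrunc p c L) (ptrunc p c' L)"
    using assms by (simp_all add: pcong_ptrunc_mono pcong_mono)
  then have "pcong p (n + 1) (ptrunc p c (n + 1)) (ptrunc p c' (n + 1))"
    using pcong_sym pcong_trans by metis
  then show False using padic_digit_eq[OF assms(1-3) n(2)] n(1) by blast
qed

lemma padic_eqI:
  assumes "p > 0" "padic p c" "padic p c'" "\<And>m. pcong p m (ptrunc p c m) (ptrunc p c' m)"
  shows "c = c'"
proof
  fix n show "c n = c' n" using padic_eq_below[OF assms(1-3) assms(4)[of "n + 1"]] by simp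
qed

lemma digits_below_zero_if_pcong:
  assumes "p > 0" "padic p c" "pcong p L (ptrunc p c L) 0"
  shows "\<forall>n<L. c n = 0"
proof -
  have "padic p (\<lambda>_. 0)" "ptrunc p (\<lambda>_. 0) L = 0"
    using assms(1) unfolding padic_def by (auto intro: ptrunc_eq_0)
  then show ?thesis using padic_eq_below[OF assms(1,2), of "\<lambda>_. 0" L] assms(3) by simp
qed

definition digits :: "nat \<Rightarrow> rat \<Rightarrow> int \<Rightarrow> int" where
  "digits p q n = \<lfloor>q / pp p powi n\<rfloor> mod int p"

lemma digits_range: "p > 0 \<Longrightarrow> 0 \<le> digits p q n \<and> digits p q n < int p"
  unfolding digits_def by simp

lemma digits_below:
  assumes "p > 0" "pcong p N q 0" "n < N" shows "digits p q n = 0"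
proof -
  obtain k where k: "q = of_int k * pp p powi N" using assms(2) unfolding pcong_def by auto
  define d where "d = nat (N - n)"
  have d1: "d \<ge> 1" and Nd: "N = n + int d" using assms(3) unfolding d_def by auto
  have h: "q / pp p powi n = of_int (k * int p ^ d)"
    using assms(1) unfolding k Nd by (simp add: power_int_add power_int_of_nat)
  have "\<lfloor>q / pp p powi n\<rfloor> = k * int p ^ d" by (simp only: h floor_of_int)
  moreover have "int p dvd k * int p ^ d" using d1 by (simp add: dvd_power)
  ultimately show ?thesis unfolding digits_def by simp
qed

lemma padic_digits: "p > 0 \<Longrightarrow> pcong p N q 0 \<Longrightarrow> padic p (digits p q)"
  unfolding padic_def using digits_range digits_below by blast

lemma digits_cong:
  assumes "p > 0" "pcong p (n + 1) q q'" shows "digits p q n = digits p q' n"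
proof -
  obtain k where k: "q - q' = of_int k * pp p powi (n + 1)" using assms(2) unfolding pcong_def by auto
  have h: "q / pp p powi n = q' / pp p powi n + of_int (k * int p)"
  proof -
    have "q = q' + of_int k * pp p powi (n + 1)" using k by (simp add: algebra_simps)
    then show ?thesis using assms(1) by (simp add: power_int_add field_simps)
  qed
  have "\<lfloor>q / pp p powi n\<rfloor> = \<lfloor>q' / pp p powi n\<rfloor> + k * int p"
    by (simp only: h floor_add_int)
  then show ?thesis unfolding digits_def by simp
qed

lemma floor_divide_of_nat_rat: "\<lfloor>x / of_nat n\<rfloor> = \<lfloor>x\<rfloor> div int n" for x :: rat
proof -
  have "\<lfloor>x / of_nat n\<rfloor> = \<lfloor>(of_rat (x / of_nat n) :: real)\<rfloor>" by (simp only: of_rat_floor)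
  also have "\<dots> = \<lfloor>of_rat x / real_of_int (int n)\<rfloor>" by (simp add: of_rat_divide)
  also have "\<dots> = \<lfloor>(of_rat x :: real)\<rfloor> div int n" by (rule floor_divide_real_eq_div) simp
  finally show ?thesis by (simp only: of_rat_floor)
qed

lemma ptrunc_digits:
  assumes "p > 0" "pcong p N q 0" "N \<le> m"
  shows "ptrunc p (digits p q) m = q - of_int \<lfloor>q / pp p powi m\<rfloor> * pp p powi m"
proof -
  obtain d where d: "m = N + int d" using assms(3) by (metis le_iff_add zle_iff_zadd)
  have pd: "padic p (digits p q)" using padic_digits[OF assms(1,2)] .
  have "ptrunc p (digits p q) (N + int d) = q - of_int \<lfloor>q / pp p powi (N + int d)\<rfloor> * pp p powi (N + int d)"
  proof (induction d)
    case 0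
    obtain k where k: "q = of_int k * pp p powi N" using assms(2) unfolding pcong_def by auto
    have "ptrunc p (digits p q) N = 0" by (rule ptrunc_eq_0) (use digits_below[OF assms(1,2)] in auto)
    moreover have "q / pp p powi N = of_int k" using assms(1) k by simp
    ultimately show ?case using k by simp
  next
    case (Suc d)
    define m' where "m' = N + int d"
    define F where "F = \<lfloor>q / pp p powi m'\<rfloor>"
    have e: "N + int (Suc d) = m' + 1" unfolding m'_def by simp
    have F1: "\<lfloor>q / pp p powi (m' + 1)\<rfloor> = F div int p"
    proof -
      have h: "q / pp p powi (m' + 1) = (q / pp p powi m') / pp p" using assms(1) by (simp add: power_int_add)
      show ?thesis unfolding F_def by (simp only: h floor_divide_of_nat_rat)
    qed
    have "ptrunc p (digits p q) (m' + 1) = ptrunc p (digits p q) m' + of_int (digits p q m') * pp p powi m'"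
      by (rule ptrunc_add_1[OF pd])
    also have "\<dots> = q - of_int F * pp p powi m' + of_int (F mod int p) * pp p powi m'"
      using Suc unfolding m'_def F_def digits_def by simp
    also have "\<dots> = q - of_int (F div int p * int p) * pp p powi m'"
    proof -
      have h: "(of_int F :: rat) = of_int (F div int p) * pp p + of_int (F mod int p)"
        by (metis div_mult_mod_eq of_int_add of_int_mult of_int_of_nat_eq)
      show ?thesis by (subst h) (simp add: algebra_simps)
    qed
    also have "\<dots> = q - of_int \<lfloor>q / pp p powi (m' + 1)\<rfloor> * pp p powi (m' + 1)"
      using assms(1) unfolding F1 by (simp add: power_int_add)
    finally show ?case unfolding e .
  qed
  then show ?thesis unfolding d .
qed

lemma pcong_ptrunc_digits:
  assumes "p > 0" "pcong p N q 0" shows "pcong p m (ptrunc p (digits p q) m) q"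
proof (cases "N \<le> m")
  case True
  show ?thesis unfolding ptrunc_digits[OF assms True] pcong_def
    by (rule exI[of _ "- \<lfloor>q / pp p powi m\<rfloor>"]) simp
next
  case False
  have "ptrunc p (digits p q) m = 0" by (rule ptrunc_eq_0) (use digits_below[OF assms] False in auto)
  moreover have "pcong p m q 0" by (rule pcong_mono[OF assms(1) _ assms(2)]) (use False in simp)
  ultimately show ?thesis by (simp add: pcong_sym)
qed

section \<open>\<open>p\<close>-adic limits, differences and products\<close>

definition is_plim :: "nat \<Rightarrow> (int \<Rightarrow> rat) \<Rightarrow> (int \<Rightarrow> int) \<Rightarrow> bool" where
  "is_plim p s c \<longleftrightarrow> padic p c \<and> (\<forall>m. \<exists>M. \<forall>m'\<ge>M. pcong p m (ptrunc p c m) (s m'))"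

lemma plim_is_plim: "plim p s = (THE c. is_plim p s c)"
  unfolding plim_def is_plim_def ..

lemma ex_is_plim:
  fixes s :: "int \<Rightarrow> rat"
  assumes p0: "p > 0" and lb: "\<And>m'. pcong p N (s m') 0"
    and cau: "\<And>m. \<exists>M. \<forall>m'\<ge>M. pcong p m (s m') (s M)"
  shows "\<exists>c. is_plim p s c"
proof -
  obtain Mf where Mf: "\<And>m m'. m' \<ge> Mf m \<Longrightarrow> pcong p m (s m') (s (Mf m))"
    using cau by metis
  \<comment> \<open>digit \<open>n\<close> of the limit is read off a term of \<open>s\<close> that is stable modulo \<open>p^(n+1)\<close>\<close>
  define c where "c n = digits p (s (Mf (n + 1))) n" for n
  have pc: "padic p c" unfolding padic_def
  proof
    show "\<forall>n. 0 \<le> c n \<and> c n < int p" unfolding c_def using digits_range[OF p0] by blast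
    show "\<exists>N. \<forall>n<N. c n = 0" unfolding c_def using digits_below[OF p0 lb] by blast
  qed
  have "\<exists>M. \<forall>m'\<ge>M. pcong p m (ptrunc p c m) (s m')" for m
  proof -
    define M where "M = Max (insert 0 ((\<lambda>n. Mf (n + 1)) ` {N..<m}))"
    have MM: "Mf (n + 1) \<le> M" if "n \<in> {N..<m}" for n
      unfolding M_def using that by (intro Max_ge) auto
    have "pcong p m (ptrunc p c m) (s m')" if m': "m' \<ge> M" for m'
    proof -
      have "c n = digits p (s m') n" if n: "n < m" for n
      proof (cases "n < N")
        case True
        then show ?thesis unfolding c_def using digits_below[OF p0 lb] by simp
      next
        case False
        then have "Mf (n + 1) \<le> m'" using MM[of n] n m' by auto
        then have "pcong p (n + 1) (s m') (s (Mf (n + 1)))" by (rule Mf)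
        then show ?thesis unfolding c_def by (simp add: digits_cong[OF p0] pcong_sym)
      qed
      then have "ptrunc p c m = ptrunc p (digits p (s m')) m" by (rule ptrunc_cong)
      then show ?thesis using pcong_ptrunc_digits[OF p0 lb] by simp
    qed
    then show ?thesis by blast
  qed
  then show ?thesis using pc unfolding is_plim_def by blast
qed

lemma is_plim_unique:
  assumes "p > 0" "is_plim p s c" "is_plim p s c'"
  shows "c = c'"
proof (rule padic_eqI)
  show "p > 0" "padic p c" "padic p c'" using assms unfolding is_plim_def by auto
  fix m
  obtain M1 where "\<forall>m'\<ge>M1. pcong p m (ptrunc p c m) (s m')"
    using assms(2) unfolding is_plim_def by blast
  moreover obtain M2 where "\<forall>m'\<ge>M2. pcong p m (ptrunc p c' m) (s m')"
    using assms(3) unfolding is_plim_def by blast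
  ultimately
  have "pcong p m (ptrunc p c m) (s (max M1 M2))" "pcong p m (ptrunc p c' m) (s (max M1 M2))"
    by auto
  then show "pcong p m (ptrunc p c m) (ptrunc p c' m)" using pcong_sym pcong_trans by blast
qed

lemma is_plim_plim:
  assumes "p > 0" "is_plim p s c" shows "is_plim p s (plim p s)"
  unfolding plim_is_plim
  by (rule theI[where P = "is_plim p s", OF assms(2)]) (rule is_plim_unique[OF assms(1) _ assms(2)])

lemma is_plim_psub:
  assumes "p > 0" "padic p a" "padic p b"
  shows "is_plim p (\<lambda>m. ptrunc p a m - ptrunc p b m) (psub p a b)"
proof -
  obtain Na where Na: "\<And>m. pcong p Na (ptrunc p a m) 0" using padic_pcong_ptrunc_zero[OF assms(1,2)] by blast
  obtain Nb where Nb: "\<And>m. pcong p Nb (ptrunc p b m) 0" using padic_pcong_ptrunc_zero[OF assms(1,3)] by blast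
  have "pcong p (min Na Nb) (ptrunc p a m - ptrunc p b m) 0" for m
    using pcong_diff[OF pcong_mono[OF assms(1) _ Na] pcong_mono[OF assms(1) _ Nb]] by simp
  moreover have "\<exists>M. \<forall>m'\<ge>M. pcong p m (ptrunc p a m' - ptrunc p b m') (ptrunc p a M - ptrunc p b M)" for m
    using pcong_diff[OF pcong_ptrunc_mono[OF assms(1,2)] pcong_ptrunc_mono[OF assms(1,3)]] by blast
  ultimately have "\<exists>c. is_plim p (\<lambda>m. ptrunc p a m - ptrunc p b m) c"
    by (rule ex_is_plim[OF assms(1)])
  then obtain c where "is_plim p (\<lambda>m. ptrunc p a m - ptrunc p b m) c" ..
  then show ?thesis unfolding psub_def by (rule is_plim_plim[OF assms(1)])
qed

lemma is_plim_pmult: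
  assumes "p > 0" "padic p a" "padic p b"
  shows "is_plim p (\<lambda>m. ptrunc p a m * ptrunc p b m) (pmult p a b)"
proof -
  obtain Na where Na: "\<And>m. pcong p Na (ptrunc p a m) 0" using padic_pcong_ptrunc_zero[OF assms(1,2)] by blast
  obtain Nb where Nb: "\<And>m. pcong p Nb (ptrunc p b m) 0" using padic_pcong_ptrunc_zero[OF assms(1,3)] by blast
  define N where "N = min Na Nb"
  have N: "pcong p N (ptrunc p a m) 0" "pcong p N (ptrunc p b m) 0" for m
    unfolding N_def by (simp_all add: pcong_mono[OF assms(1) _ Na] pcong_mono[OF assms(1) _ Nb])
  have "pcong p (N + N) (ptrunc p a m * ptrunc p b m) 0" for m
    using pcong_mult_zero[OF assms(1) N] .
  moreover have "\<exists>M. \<forall>m'\<ge>M. pcong p m (ptrunc p a m' * ptrunc p b m') (ptrunc p a M * ptrunc p b M)" for m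
  proof -
    define M where "M = max m 0 - min N 0"
    have "m \<le> M + min M N" unfolding M_def by (simp add: min_def max_def)
    then have "pcong p m (ptrunc p a m' * ptrunc p b m') (ptrunc p a M * ptrunc p b M)" if "M \<le> m'" for m'
      using pcong_mono[OF assms(1) _ pcong_mult[OF assms(1) pcong_ptrunc_mono pcong_ptrunc_mono N]]
        assms that by blast
    then show ?thesis by blast
  qed
  ultimately have "\<exists>c. is_plim p (\<lambda>m. ptrunc p a m * ptrunc p b m) c"
    by (rule ex_is_plim[OF assms(1)])
  then obtain c where "is_plim p (\<lambda>m. ptrunc p a m * ptrunc p b m) c" ..
  then show ?thesis unfolding pmult_def by (rule is_plim_plim[OF assms(1)])
qed

lemma psub_digits_below_zero:
  assumes "p > 0" "padic p a" "padic p b" "pcong p L (ptrunc p a L) (ptrunc p b L)"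
  shows "\<forall>n<L. psub p a b n = 0"
proof -
  note lim = is_plim_psub[OF assms(1-3), unfolded is_plim_def]
  then obtain M where M: "\<forall>m'\<ge>M. pcong p L (ptrunc p (psub p a b) L) (ptrunc p a m' - ptrunc p b m')"
    by blast
  have "pcong p L (ptrunc p (psub p a b) L) (ptrunc p a (max M L) - ptrunc p b (max M L))"
    using M by simp
  also have "pcong p L (ptrunc p a (max M L) - ptrunc p b (max M L)) (ptrunc p a L - ptrunc p b L)"
    using pcong_diff[OF pcong_ptrunc_mono pcong_ptrunc_mono] assms(1-3) by simp
  also have "pcong p L (ptrunc p a L - ptrunc p b L) 0"
    using assms(4) by (subst (asm) pcong_iff_diff_zero)
  finally have "pcong p L (ptrunc p (psub p a b) L) 0" .
  then show ?thesis using digits_below_zero_if_pcong[OF assms(1)] lim by blast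
qed

section \<open>Absolute values and characters\<close>

lemma padic_least_nonzero_digit:
  assumes "padic p c" "c \<noteq> (\<lambda>_. 0)"
  obtains v where "c v \<noteq> 0" "\<forall>n<v. c n = 0"
proof -
  obtain n where "c n \<noteq> 0" using assms(2) by auto
  moreover obtain N where "\<forall>n<N. c n = 0" using padic_bounded_below[OF assms(1)] by blast
  ultimately show ?thesis using exists_least_int[of "\<lambda>n. c n \<noteq> 0" n N] that by blast
qed

lemma pabs_eq_powi:
  assumes "c v \<noteq> 0" "\<forall>n<v. c n = 0"
  shows "pabs p c = real p powi (- v)"
proof -
  have "(LEAST n. c n \<noteq> 0) = v"
    by (rule Least_equality) (use assms in \<open>auto simp: not_less[symmetric]\<close>)
  then show ?thesis unfolding pabs_def using assms(1) by auto
qed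

lemma pabs_le_powi:
  assumes "p > 1" "padic p c" "\<forall>n<L. c n = 0"
  shows "pabs p c \<le> real p powi (- L)"
proof (cases "c = (\<lambda>_. 0)")
  case True
  then show ?thesis unfolding pabs_def using assms(1) by simp
next
  case False
  then obtain v where v: "c v \<noteq> 0" "\<forall>n<v. c n = 0"
    using padic_least_nonzero_digit[OF assms(2)] by blast
  have "L \<le> v" using v(1) assms(3) by force
  then show ?thesis using assms(1) by (simp add: pabs_eq_powi[OF v] power_int_increasing)
qed

lemma ptrunc_eq_unit_times_powi:
  assumes "p > 0" "padic p c" "c v \<noteq> 0" "\<forall>n<v. c n = 0" "v < m"
  obtains u where "ptrunc p c m = of_int u * pp p powi v" "\<not> int p dvd u"
proof -
  obtain u where u: "ptrunc p c m = of_int u * pp p powi v"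
    using pcong_ptrunc_zero[OF assms(1), of v c m] assms(4) unfolding pcong_def by auto
  moreover have "\<not> int p dvd u"
  proof
    assume "int p dvd u"
    then obtain u' where "u = int p * u'" by (elim dvdE)
    then have "pcong p (v + 1) (ptrunc p c m) 0"
      unfolding pcong_def u using assms(1) by (auto simp: power_int_add mult_ac)
    moreover have "pcong p (v + 1) (ptrunc p c m) (ptrunc p c (v + 1))"
      using assms(5) by (intro pcong_ptrunc_mono assms(1) assms(2)) simp
    ultimately have "pcong p (v + 1) (ptrunc p c (v + 1)) 0" by (metis pcong_sym pcong_trans)
    then have "\<forall>n<v + 1. c n = 0" by (rule digits_below_zero_if_pcong[OF assms(1,2)])
    then show False using assms(3) by simp
  qed
  ultimately show ?thesis using that by blast
qed

lemma pcong_cancel_coprime_factor: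
  assumes "prime p" "a = of_int u * pp p powi v" "\<not> int p dvd u"
    and "pcong p L (a * b) 0" "pcong p N b 0"
  shows "pcong p (L - v) b 0"
proof (cases "L - v \<le> N")
  case True
  show ?thesis using pcong_mono[OF _ True assms(5)] assms(1) by (simp add: prime_gt_0_nat)
next
  case False
  have "p > 0" using assms(1) by (simp add: prime_gt_0_nat)
  define d where "d = nat (L - v - N)"
  have Ld: "L - v = N + int d" unfolding d_def using False by simp
  obtain z where z: "b = of_int z * pp p powi N" using assms(5) unfolding pcong_def by auto
  obtain t where t: "a * b = of_int t * pp p powi L" using assms(4) unfolding pcong_def by auto
  have "of_int (u * z) * pp p powi (v + N) = (of_int t * pp p powi L :: rat)"
    using t unfolding assms(2) z using \<open>p > 0\<close> by (simp add: power_int_add mult_ac)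
  then have "(of_int (u * z) :: rat) = of_int t * pp p powi (L - v - N)"
    using \<open>p > 0\<close> by (simp add: power_int_diff field_simps)
  also have "pp p powi (L - v - N) = pp p ^ d" unfolding d_def using False
    by (simp add: power_int_of_nat[symmetric])
  finally have "u * z = t * int p ^ d" by (metis of_int_eq_iff of_int_mult of_int_of_nat_eq of_int_power)
  moreover have "coprime (int p ^ d) u" using assms(1,3) by (simp add: prime_imp_coprime_int)
  ultimately have "int p ^ d dvd z" by (metis coprime_dvd_mult_right_iff dvd_triv_right)
  then obtain s where s: "z = int p ^ d * s" by (elim dvdE)
  have "b = of_int s * pp p powi (L - v)"
    unfolding z s Ld using \<open>p > 0\<close> by (simp add: power_int_add power_int_of_nat mult_ac)
  then show ?thesis unfolding pcong_def by auto
qed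

lemma pabs_psub_le:
  assumes "prime p" "padic p \<xi>" "\<xi> v \<noteq> 0" "\<forall>n<v. \<xi> n = 0" "padic p x" "padic p y"
    and "v < m" "- 1 - v \<le> m"
    and "pcong p (- 1) (ptrunc p \<xi> m * (ptrunc p x m - ptrunc p y m)) 0"
  shows "pabs p (psub p x y) \<le> real p powi (v + 1)"
proof -
  have "p > 1" using prime_gt_1_nat[OF assms(1)] .
  then have "p > 0" by simp
  obtain u where u: "ptrunc p \<xi> m = of_int u * pp p powi v" "\<not> int p dvd u"
    using ptrunc_eq_unit_times_powi[OF \<open>p > 0\<close> assms(2-4,7)] by blast
  obtain Nx Ny where "\<forall>n<Nx. x n = 0" "\<forall>n<Ny. y n = 0"
    using padic_bounded_below assms(5,6) by metis
  then have "pcong p (min Nx Ny) (ptrunc p x m - ptrunc p y m) 0"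
    using pcong_diff[OF pcong_ptrunc_zero pcong_ptrunc_zero] \<open>p > 0\<close> by fastforce
  then have "pcong p (- 1 - v) (ptrunc p x m - ptrunc p y m) 0"
    by (rule pcong_cancel_coprime_factor[OF assms(1) u assms(9)])
  moreover have "pcong p (- 1 - v) (ptrunc p x (- 1 - v) - ptrunc p y (- 1 - v)) (ptrunc p x m - ptrunc p y m)"
    using pcong_diff[OF pcong_ptrunc_mono pcong_ptrunc_mono] \<open>p > 0\<close> assms(5,6,8) by (metis pcong_sym)
  ultimately have "pcong p (- 1 - v) (ptrunc p x (- 1 - v)) (ptrunc p y (- 1 - v))"
    by (metis pcong_iff_diff_zero pcong_trans)
  then have "\<forall>n < - 1 - v. psub p x y n = 0"
    by (rule psub_digits_below_zero[OF \<open>p > 0\<close> assms(5,6)])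
  then show ?thesis
    using pabs_le_powi[OF \<open>p > 1\<close>] is_plim_psub[OF \<open>p > 0\<close> assms(5,6)] unfolding is_plim_def by fastforce
qed

lemma pchar_cis: "pchar p c = cis (2 * pi * pfrac p c)"
  unfolding pchar_def cis_conv_exp by (simp add: mult_ac)

lemma pchar_pmult_eq_cis_ptrunc:
  assumes "p > 0" "padic p a" "padic p b"
  shows "\<exists>M. \<forall>m\<ge>M. pchar p (pmult p a b) = cis (2 * pi * of_rat (ptrunc p a m * ptrunc p b m))"
proof -
  obtain M where M: "\<And>m. M \<le> m \<Longrightarrow> pcong p 0 (ptrunc p (pmult p a b) 0) (ptrunc p a m * ptrunc p b m)"
    using is_plim_pmult[OF assms] unfolding is_plim_def by blast
  have "pchar p (pmult p a b) = cis (2 * pi * of_rat (ptrunc p a m * ptrunc p b m))" if m: "M \<le> m" for m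
  proof -
    obtain k where k: "ptrunc p (pmult p a b) 0 = ptrunc p a m * ptrunc p b m + of_int k"
      using M[OF m] unfolding pcong_def by (auto simp: algebra_simps)
    have "cis (2 * pi * of_rat (of_int k)) = 1" by (simp add: of_rat_of_int_eq)
    then show ?thesis
      unfolding pchar_cis pfrac_def k by (simp add: of_rat_add distrib_left cis_mult[symmetric])
  qed
  then show ?thesis by blast
qed

lemma pcong_zero_common_level:
  assumes "p > 0" "finite E" "\<And>y. y \<in> E \<Longrightarrow> \<exists>N. pcong p N (f y) 0"
  obtains D w where "D \<ge> 1" "\<And>y. y \<in> E \<Longrightarrow> f y = of_int (w y) * pp p powi (- int D)"
proof -
  obtain N where N: "\<And>y. y \<in> E \<Longrightarrow> pcong p (N y) (f y) 0" using assms(3) by metis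
  define D where "D = nat (1 - Min (insert 0 (N ` E)))"
  have "Min (insert 0 (N ` E)) \<le> 0" using assms(2) by (auto intro: Min_le)
  then have "D \<ge> 1" unfolding D_def by simp
  have "- int D \<le> N y" if "y \<in> E" for y
  proof -
    have "Min (insert 0 (N ` E)) \<le> N y" using that assms(2) by (auto intro: Min_le)
    then show ?thesis using \<open>D \<ge> 1\<close> unfolding D_def by linarith
  qed
  then have "\<exists>w. f y = of_int w * pp p powi (- int D)" if "y \<in> E" for y
    using pcong_mono[OF assms(1) _ N[OF that]] that unfolding pcong_def by auto
  then obtain w where "\<And>y. y \<in> E \<Longrightarrow> f y = of_int (w y) * pp p powi (- int D)" by metis
  then show ?thesis using that \<open>D \<ge> 1\<close> by blast
qed

lemma pchar_pmult_eq_root_of_unity: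
  assumes "p > 0" "finite E" "\<forall>y\<in>E. padic p y" "padic p \<xi>"
  obtains m D w where "m0 \<le> m" "D \<ge> 1"
    and "\<And>y. y \<in> E \<Longrightarrow> ptrunc p \<xi> m * ptrunc p y m = of_int (w y) * pp p powi (- int D)"
    and "\<And>y. y \<in> E \<Longrightarrow> pchar p (pmult p \<xi> y) = cis (2 * pi * of_int (w y) / real (p ^ D))"
proof -
  have "\<forall>y\<in>E. \<exists>M. \<forall>m\<ge>M. pchar p (pmult p \<xi> y) = cis (2 * pi * of_rat (ptrunc p \<xi> m * ptrunc p y m))"
    using pchar_pmult_eq_cis_ptrunc[OF assms(1,4)] assms(3) by blast
  from bchoice[OF this] obtain M where M: "\<And>y m. y \<in> E \<Longrightarrow> M y \<le> m \<Longrightarrow>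
      pchar p (pmult p \<xi> y) = cis (2 * pi * of_rat (ptrunc p \<xi> m * ptrunc p y m))"
    by blast
  define m where "m = max (Max (M ` E)) m0"
  define f where "f y = ptrunc p \<xi> m * ptrunc p y m" for y
  have "\<exists>N. pcong p N (f y) 0" if "y \<in> E" for y
  proof -
    obtain N1 where "\<And>m. pcong p N1 (ptrunc p \<xi> m) 0"
      using padic_pcong_ptrunc_zero[OF assms(1,4)] by blast
    moreover obtain N2 where "\<And>m. pcong p N2 (ptrunc p y m) 0"
      using padic_pcong_ptrunc_zero[OF assms(1)] assms(3) \<open>y \<in> E\<close> by blast
    ultimately show ?thesis unfolding f_def using pcong_mult_zero[OF assms(1)] by blast
  qed
  then obtain D w where "D \<ge> 1" and w: "\<And>y. y \<in> E \<Longrightarrow> f y = of_int (w y) * pp p powi (- int D)"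
    using pcong_zero_common_level[OF assms(1,2), of f] by auto
  moreover have "pchar p (pmult p \<xi> y) = cis (2 * pi * of_int (w y) / real (p ^ D))" if "y \<in> E" for y
  proof -
    have "M y \<le> m" unfolding m_def using that assms(2) by (auto intro: Max_ge le_max_iff_disj[THEN iffD2])
    then have "pchar p (pmult p \<xi> y) = cis (2 * pi * of_rat (f y))" using M that unfolding f_def by blast
    also have "of_rat (f y) = (of_int (w y) / real (p ^ D) :: real)"
      using w[OF that] by (simp add: power_int_minus power_int_of_nat of_rat_mult of_rat_inverse
          of_rat_power divide_inverse)
    finally show ?thesis by simp
  qed
  moreover have "m0 \<le> m" unfolding m_def by simp
  ultimately show ?thesis using that unfolding f_def by blast
qed

theorem mainTheorem6:
  fixes p :: nat and E :: "(int \<Rightarrow> int) set" and \<alpha> :: "(int \<Rightarrow> int) \<Rightarrow> int"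
    and \<xi> :: "int \<Rightarrow> int"
  assumes "prime p"
    and "finite E" and "E \<noteq> {}" and "\<forall>x\<in>E. padic p x"
    and "\<forall>x\<in>E. \<alpha> x \<noteq> 0"
    and "padic p \<xi>" and "\<xi> \<noteq> (\<lambda>_. 0)"
    and "nu_hat p E \<alpha> \<xi> = 0"
  shows "\<forall>x\<in>E. \<exists>x'\<in>E. x' \<noteq> x \<and> pabs p (psub p x x') \<le> real p / pabs p \<xi>"
proof
  fix x assume "x \<in> E"
  have "p > 0" using prime_gt_0_nat[OF assms(1)] .
  obtain v where v: "\<xi> v \<noteq> 0" "\<forall>n<v. \<xi> n = 0"
    using padic_least_nonzero_digit[OF assms(6,7)] by blast
  obtain m D w where "\<bar>v\<bar> + 1 \<le> m" "D \<ge> 1"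
    and w: "\<And>y. y \<in> E \<Longrightarrow> ptrunc p \<xi> m * ptrunc p y m = of_int (w y) * pp p powi (- int D)"
    and \<chi>: "\<And>y. y \<in> E \<Longrightarrow> pchar p (pmult p \<xi> y) = cis (2 * pi * of_int (w y) / real (p ^ D))"
    using pchar_pmult_eq_root_of_unity[OF \<open>p > 0\<close> assms(2,4,6)] by metis
  have "(\<Sum>y\<in>E. of_int (\<alpha> y) * cis (2 * pi * of_int (- w y) / real (p ^ D))) = 0"
    using assms(8) \<chi> unfolding nu_hat_def by (simp add: cis_cnj)
  then obtain y where y: "y \<in> E" "y \<noteq> x" "int (p ^ (D - 1)) dvd w y - w x"
    using vanishing_sum_prime_power_roots_of_unity[OF assms(1) \<open>D \<ge> 1\<close> assms(2) \<open>x \<in> E\<close> assms(5),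
        where w = "\<lambda>y. - w y"] by auto
  then have "pcong p (int (D - 1) + - int D) (of_int (w x - w y) * pp p powi (- int D)) 0"
    by (intro pcong_of_int_mult_powi \<open>p > 0\<close>) (simp add: dvd_diff_commute)
  then have "pcong p (- 1) (ptrunc p \<xi> m * (ptrunc p x m - ptrunc p y m)) 0"
    using w[OF \<open>x \<in> E\<close>] w[OF y(1)] \<open>D \<ge> 1\<close> by (simp add: algebra_simps of_nat_diff)
  moreover have "v < m" "- 1 - v \<le> m" using \<open>\<bar>v\<bar> + 1 \<le> m\<close> by auto
  ultimately have "pabs p (psub p x y) \<le> real p powi (v + 1)"
    using pabs_psub_le[OF assms(1,6) v] assms(4) \<open>x \<in> E\<close> y(1) by blast
  moreover have "real p / pabs p \<xi> = real p powi (v + 1)"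
    using \<open>p > 0\<close> by (simp add: pabs_eq_powi[OF v] power_int_minus power_int_add_1' divide_inverse)
  ultimately show "\<exists>x'\<in>E. x' \<noteq> x \<and> pabs p (psub p x x') \<le> real p / pabs p \<xi>"
    using y by auto
qed

end
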